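(* Suppose that for some $T<\infty$, real-valued observations $X_1,\ldots,X_T$ are drawn i.i.d. from a known distribution with CDF $F_0$, and $X_{T+1},X_{T+2},\ldots$ are drawn i.i.d. from an unknown distribution with CDF $F_1\ne F_0$, independently. Let $\Delta:=d_{\mathrm{KS}}(F_1,F_0)$. Then the BCS-Detector instantiated with the Kolmogorov–Smirnov confidence sequence described below satisfies $$\mathbb{E}_T[(\tau-T)^+]=\mathcal{O}\!\left(\frac{\log\log(1/\Delta)+\log(1/\alpha)}{\Delta^2}\right).$$
   Context: $\Theta$ is the set of all CDFs on $\mathbb{R}$ with the Kolmogorov–Smirnov metric $d_{\mathrm{KS}}(F,G)=\sup_{x\in\mathbb{R}}|F(x)-G(x)|$. The forward confidence sequence is $C_t=\{\theta\in\Theta: d_{\mathrm{KS}}(\theta,\widehat\theta_t)\le w_t/2\}$, where $\widehat\theta_t$ is the empirical CDF of $X_1,\ldots,X_t$ and $w_t=1.7\sqrt{(\log\log(et)+0.8\log(1612/\alpha))/t}$, made nested by running intersections; for each $n$ the backward confidence sequence $\{B^{(n)}_t\}_{t\in[n]}$ is the same construction applied to the reversed data, so $B^{(n)}_t$ uses $X_t,\ldots,X_n$, nested. The BCS-Detector stops at $\tau=\inf\{n\ge1: C_n\cap B^{(n)}_1=\emptyset\}$. Knowledge of $F_0$ means the forward sets contain $F_0$ before the change with probability one. $\mathbb{E}_T$ denotes expectation when the change occurs at $T$; $\mathcal{O}$ hides absolute constants. *)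

theory Defs
  imports "HOL-Probability.Probability"
begin

definition dKS :: "(real \<Rightarrow> real) \<Rightarrow> (real \<Rightarrow> real) \<Rightarrow> real" where
  "dKS F G = (SUP x. \<bar>F x - G x\<bar>)"

text \<open>Empirical CDF of the observations X_a, ..., X_b (1-indexed, a \<le> b);
  the observation X_k is the coordinate \<omega> k of the sample path.\<close>
definition ecdf :: "(nat \<Rightarrow> real) \<Rightarrow> nat \<Rightarrow> nat \<Rightarrow> real \<Rightarrow> real" where
  "ecdf \<omega> a b = (\<lambda>x. real (card {i \<in> {a..b}. \<omega> i \<le> x}) / real (b + 1 - a))"

definition ks_width :: "real \<Rightarrow> nat \<Rightarrow> real" where
  "ks_width \<alpha> t = 1.7 * sqrt ((ln (ln (exp 1 * real t)) + 0.8 * ln (1612 / \<alpha>)) / real t)"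

text \<open>Backward confidence set B^(n)_1: the running intersection over t = 1..n of the
  KS balls around the empirical CDF of X_t, ..., X_n (which are the first n - t + 1
  points of the reversed data X_n, X_(n-1), ...).\<close>
definition back_cs :: "real \<Rightarrow> (nat \<Rightarrow> real) \<Rightarrow> nat \<Rightarrow> (real \<Rightarrow> real) set" where
  "back_cs \<alpha> \<omega> n = (\<Inter>t\<in>{1..n}. {\<theta>. dKS \<theta> (ecdf \<omega> t n) \<le> ks_width \<alpha> (n + 1 - t) / 2})"

text \<open>Forward confidence sets when F0 is known: C_n = {F0} for all n.
  The detector stops at the first n \<ge> 1 with C_n \<inter> B^(n)_1 = {}.\<close>
definition detects :: "real \<Rightarrow> (real \<Rightarrow> real) \<Rightarrow> (nat \<Rightarrow> real) \<Rightarrow> nat \<Rightarrow> bool" where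
  "detects \<alpha> F0 \<omega> n \<longleftrightarrow> 1 \<le> n \<and> {F0} \<inter> back_cs \<alpha> \<omega> n = {}"

text \<open>Positive part of the detection delay, (\<tau> - T)^+, with value \<infinity> if \<tau> = \<infinity>.\<close>
definition delay :: "real \<Rightarrow> (real \<Rightarrow> real) \<Rightarrow> nat \<Rightarrow> (nat \<Rightarrow> real) \<Rightarrow> ennreal" where
  "delay \<alpha> F0 T \<omega> =
     (if \<exists>n. detects \<alpha> F0 \<omega> n
      then ennreal (real ((LEAST n. detects \<alpha> F0 \<omega> n) - T))
      else \<infinity>)"

text \<open>Law of the sample path when the change occurs at T: X_1..X_T iid M0, X_(T+1),...
  iid M1, all independent (coordinate 0 is an unused dummy).\<close>
definition change_law :: "real measure \<Rightarrow> real measure \<Rightarrow> nat \<Rightarrow> (nat \<Rightarrow> real) measure" where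
  "change_law M0 M1 T = (\<Pi>\<^sub>M i\<in>(UNIV::nat set). (if i \<le> T then M0 else M1))"

end

theory Submission
  imports Defs
begin

(* With F0 known, the detector stops at T + k as soon as the empirical CDF of the post-change
   block X_(T+1), ..., X_(T+k) is farther than w_k/2 from F0 in KS distance.  Pick x with
   |F1 x - F0 x| > Delta/2.  Once k is of order (log log (1/Delta) + log (1/alpha)) / Delta^2 we
   have w_k <= Delta/2, so missing the change at T + k forces the empirical CDF at x to deviate
   from F1 x by at least Delta/4, an event of probability at most 2 exp (-k Delta^2/8) by
   Hoeffding's inequality.  Summing these tail probabilities bounds the expected delay. *)

lemma abs_le_dKS:
  assumes "\<And>x. \<bar>F x - G x\<bar> \<le> c"
  shows "\<bar>F x - G x\<bar> \<le> dKS F G"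
  unfolding dKS_def by (rule cSUP_upper) (use assms in \<open>auto intro!: bdd_aboveI2\<close>)

lemma dKS_le:
  assumes "\<And>x. \<bar>F x - G x\<bar> \<le> c"
  shows "dKS F G \<le> c"
  unfolding dKS_def by (rule cSUP_least) (use assms in auto)

lemma obtain_gt_half_dKS:
  assumes "0 < dKS F G"
  obtains x where "dKS F G / 2 < \<bar>F x - G x\<bar>"
proof (rule ccontr)
  assume "\<not> thesis"
  then have "\<bar>F x - G x\<bar> \<le> dKS F G / 2" for x
    using that by (meson not_le)
  then have "dKS F G \<le> dKS F G / 2" by (rule dKS_le)
  then show False using assms by simp
qed

lemma abs_cdf_diff_le_1:
  assumes "real_distribution M0" "real_distribution M1"
  shows "\<bar>cdf M1 x - cdf M0 x\<bar> \<le> 1"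
proof -
  interpret M0: real_distribution M0 by fact
  interpret M1: real_distribution M1 by fact
  show ?thesis
    using M0.cdf_nonneg[of x] M0.cdf_bounded_prob[of x] M1.cdf_nonneg[of x] M1.cdf_bounded_prob[of x]
    by (simp add: abs_le_iff)
qed

lemma dKS_cdf_pos_le_1:
  assumes "real_distribution M0" "real_distribution M1" "cdf M1 \<noteq> cdf M0"
  shows "0 < dKS (cdf M1) (cdf M0)" "dKS (cdf M1) (cdf M0) \<le> 1"
proof -
  note bound = abs_cdf_diff_le_1[OF assms(1,2)]
  show "dKS (cdf M1) (cdf M0) \<le> 1" by (rule dKS_le[OF bound])
  obtain x where "cdf M1 x \<noteq> cdf M0 x" using assms(3) by (auto simp: fun_eq_iff)
  moreover have "\<bar>cdf M1 x - cdf M0 x\<bar> \<le> dKS (cdf M1) (cdf M0)"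
    by (rule abs_le_dKS) (rule bound)
  ultimately show "0 < dKS (cdf M1) (cdf M0)" by linarith
qed

lemma ecdf_eq_sum_indicator:
  "ecdf \<omega> a b x = (\<Sum>i\<in>{a..b}. indicator {..x} (\<omega> i)) / real (b + 1 - a)"
proof -
  have "real (card {i \<in> {a..b}. \<omega> i \<le> x}) = (\<Sum>i\<in>{i \<in> {a..b}. \<omega> i \<le> x}. 1)"
    by simp
  also have "\<dots> = (\<Sum>i\<in>{a..b}. if \<omega> i \<le> x then 1 else 0)"
    by (rule sum.inter_filter) simp
  also have "\<dots> = (\<Sum>i\<in>{a..b}. indicator {..x} (\<omega> i))"
    by (intro sum.cong) (auto simp: indicator_def)
  finally show ?thesis by (simp only: ecdf_def)
qed

lemma ecdf_nonneg_le_1: "0 \<le> ecdf \<omega> a b x" "ecdf \<omega> a b x \<le> 1"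
proof -
  have "card {i \<in> {a..b}. \<omega> i \<le> x} \<le> card {a..b}" by (rule card_mono) auto
  then have card: "card {i \<in> {a..b}. \<omega> i \<le> x} \<le> b + 1 - a" by simp
  show "0 \<le> ecdf \<omega> a b x" "ecdf \<omega> a b x \<le> 1"
    unfolding ecdf_def by (cases "b + 1 - a = 0") (use card in \<open>auto simp: divide_le_eq_1\<close>)
qed

lemma detectsI:
  assumes "t \<in> {1..n}" "ks_width \<alpha> (n + 1 - t) / 2 < dKS F0 (ecdf \<omega> t n)"
  shows "detects \<alpha> F0 \<omega> n"
  using assms unfolding detects_def back_cs_def by (auto intro!: bexI[of _ t])

lemma detects_after_change:
  fixes F0 F1 :: "real \<Rightarrow> real"
  assumes F0: "\<And>x. 0 \<le> F0 x \<and> F0 x \<le> 1" and "1 \<le> k"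
    and width: "ks_width \<alpha> k \<le> \<bar>F1 x - F0 x\<bar>"
    and near: "\<bar>ecdf \<omega> (T + 1) (T + k) x - F1 x\<bar> < \<bar>F1 x - F0 x\<bar> / 2"
  shows "detects \<alpha> F0 \<omega> (T + k)"
proof (rule detectsI)
  show "T + 1 \<in> {1..T + k}" using \<open>1 \<le> k\<close> by simp
  have "\<bar>F0 y - ecdf \<omega> (T + 1) (T + k) y\<bar> \<le> 1" for y
    using F0[of y] ecdf_nonneg_le_1[of \<omega> "T + 1" "T + k" y] by linarith
  then have "\<bar>F0 x - ecdf \<omega> (T + 1) (T + k) x\<bar> \<le> dKS F0 (ecdf \<omega> (T + 1) (T + k))"
    by (rule abs_le_dKS)
  then show "ks_width \<alpha> (T + k + 1 - (T + 1)) / 2 < dKS F0 (ecdf \<omega> (T + 1) (T + k))"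
    using width near by (simp add: abs_if split: if_splits)
qed

lemma ln_ln_exp_div_nonneg:
  fixes \<Delta> :: real
  assumes "0 < \<Delta>" "\<Delta> \<le> 1"
  shows "0 \<le> ln (ln (exp 1 / \<Delta>))"
proof -
  have "ln (exp 1 / \<Delta>) = 1 - ln \<Delta>" using assms by (simp add: ln_div)
  moreover have "ln \<Delta> \<le> 0" using assms by simp
  ultimately show ?thesis by simp
qed

lemma ln_ln_exp_mult_le:
  fixes \<Delta> u :: real
  assumes "0 < \<Delta>" "\<Delta> \<le> 1" "1 \<le> u"
  shows "ln (ln (exp 1 * (u / \<Delta>\<^sup>2))) \<le> 1 + ln (ln (exp 1 / \<Delta>)) + ln u"
proof -
  define m where "m = ln (exp 1 / \<Delta>)"
  have "ln \<Delta> \<le> 0" using assms by simp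
  then have m: "m = 1 - ln \<Delta>" "1 \<le> m" using assms by (simp_all add: m_def ln_div)
  have lnu: "0 \<le> ln u" using assms by simp
  have "ln (exp 1 * (u / \<Delta>\<^sup>2)) = 1 + ln u - 2 * ln \<Delta>"
    using assms by (simp add: ln_mult ln_div ln_realpow)
  then have eq: "ln (exp 1 * (u / \<Delta>\<^sup>2)) = ln u + 2 * m - 1" using m by simp
  have "ln u \<le> 2 * m * ln u" using mult_right_mono[OF _ lnu, of 1 "2 * m"] m by simp
  then have "ln (exp 1 * (u / \<Delta>\<^sup>2)) \<le> 2 * m * (1 + ln u)"
    unfolding eq by (simp add: algebra_simps)
  moreover have "0 < ln (exp 1 * (u / \<Delta>\<^sup>2))" unfolding eq using m lnu by simp
  moreover have "0 < 2 * m * (1 + ln u)" using m lnu by simp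
  ultimately have "ln (ln (exp 1 * (u / \<Delta>\<^sup>2))) \<le> ln (2 * m * (1 + ln u))"
    by simp
  also have "\<dots> = ln 2 + ln m + ln (1 + ln u)"
    using m(2) lnu by (simp add: ln_mult)
  also have "\<dots> \<le> 1 + ln m + ln u"
    using ln_2_less_1 ln_add_one_self_le_self[OF lnu] by simp
  finally show ?thesis unfolding m_def .
qed

lemma ln_le_div_25:
  fixes u :: real
  assumes "2500 \<le> u"
  shows "ln u \<le> u / 25"
proof -
  have u0: "0 < u" using assms by simp
  have su: "50 \<le> sqrt u" using real_sqrt_le_mono[OF assms] by simp
  have "ln u = 2 * ln (sqrt u)" using assms by (simp add: ln_sqrt)
  also have "\<dots> \<le> 2 * sqrt u" using ln_le_minus_one[of "sqrt u"] su u0 by simp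
  also have "\<dots> \<le> sqrt u * sqrt u / 25"
    using mult_left_mono[OF su, of "sqrt u"] su u0 by simp
  also have "\<dots> = u / 25" using assms by simp
  finally show ?thesis .
qed

lemma ks_width_le_half:
  assumes \<Delta>: "0 < \<Delta>" "\<Delta> \<le> 1" and \<alpha>: "0 < \<alpha>" "\<alpha> < 1"
    and k: "2500 * (1 + ln (ln (exp 1 / \<Delta>)) + ln (1 / \<alpha>)) / \<Delta>\<^sup>2 \<le> real k"
  shows "ks_width \<alpha> k \<le> \<Delta> / 2"
proof -
  define L where "L = 1 + ln (ln (exp 1 / \<Delta>)) + ln (1 / \<alpha>)"
  define u where "u = real k * \<Delta>\<^sup>2"
  have L: "1 \<le> L" using ln_ln_exp_div_nonneg[OF \<Delta>] \<alpha> by (simp add: L_def)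
  have uL: "2500 * L \<le> u" using k \<Delta> by (simp add: u_def L_def field_simps)
  with L have u: "2500 \<le> u" by simp
  have k_eq: "real k = u / \<Delta>\<^sup>2" using \<Delta> by (simp add: u_def)
  have "ln (1612 :: real) \<le> ln (2 ^ 11)" by simp
  also have "\<dots> = 11 * ln 2" using ln_realpow[of "2 :: real" 11] by simp
  also have "\<dots> < 11" using ln_2_less_1 by simp
  finally have "ln (1612 / \<alpha>) \<le> 11 + ln (1 / \<alpha>)" using \<alpha> by (simp add: ln_div)
  moreover have "ln (ln (exp 1 * real k)) \<le> 1 + ln (ln (exp 1 / \<Delta>)) + ln u"
    using ln_ln_exp_mult_le[OF \<Delta>, of u] u by (simp add: k_eq)
  moreover have "0 \<le> ln (ln (exp 1 / \<Delta>))" "0 < ln (1 / \<alpha>)"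
    using ln_ln_exp_div_nonneg[OF \<Delta>] \<alpha> by simp_all
  ultimately have "ln (ln (exp 1 * real k)) + 0.8 * ln (1612 / \<alpha>) \<le> 10 * L + ln u"
    unfolding L_def by simp
  also have "\<dots> \<le> 11 * u / 250" using uL ln_le_div_25[OF u] by simp
  finally have "(ln (ln (exp 1 * real k)) + 0.8 * ln (1612 / \<alpha>)) / real k
      \<le> (11 * u / 250) / real k"
    using u by (intro divide_right_mono) (simp_all add: k_eq)
  also have "\<dots> = 11 * \<Delta>\<^sup>2 / 250" using \<Delta> u by (simp add: k_eq)
  also have "\<dots> \<le> (\<Delta> / 3.4)\<^sup>2" by (simp add: power_divide)
  finally have "sqrt ((ln (ln (exp 1 * real k)) + 0.8 * ln (1612 / \<alpha>)) / real k)
      \<le> sqrt ((\<Delta> / 3.4)\<^sup>2)"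
    by (rule real_sqrt_le_mono)
  then show ?thesis using \<Delta> unfolding ks_width_def by simp
qed

lemma indep_vars_PiM_coordinates:
  assumes "product_prob_space M" "finite J" "J \<noteq> {}"
  shows "prob_space.indep_vars (PiM UNIV M) M (\<lambda>i \<omega>. \<omega> i) J"
proof -
  interpret product_prob_space M UNIV by fact
  interpret P: prob_space "PiM UNIV M" by (rule prob_space_PiM) (simp add: M.prob_space_axioms)
  show ?thesis
  proof (subst P.indep_vars_iff_distr_eq_PiM)
    show "distr (PiM UNIV M) (PiM J M) (\<lambda>x. \<lambda>i\<in>J. x i)
        = PiM J (\<lambda>i. distr (PiM UNIV M) (M i) (\<lambda>\<omega>. \<omega> i))"
      using distr_PiM_restrict_finite[of J] assms by (simp add: PiM_component cong: PiM_cong)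
  qed (use assms in auto)
qed

lemma product_prob_space_change_law:
  assumes "real_distribution M0" "real_distribution M1"
  shows "product_prob_space (\<lambda>i. if i \<le> T then M0 else M1)"
  using assms
  by (auto simp: product_prob_space_def product_sigma_finite_def product_prob_space_axioms_def
      real_distribution_def prob_space_imp_sigma_finite)

lemma prob_space_change_law:
  assumes "real_distribution M0" "real_distribution M1"
  shows "prob_space (change_law M0 M1 T)"
  unfolding change_law_def
  by (rule prob_space_PiM) (use assms in \<open>auto simp: real_distribution_def\<close>)

lemma sets_change_law_factor:
  assumes "real_distribution M0" "real_distribution M1"
  shows "sets (if i \<le> T then M0 else M1) = sets borel"
  using assms by (auto simp: real_distribution_def real_distribution_axioms_def)

lemma measurable_change_law_coordinate:
  assumes "real_distribution M0" "real_distribution M1"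
  shows "(\<lambda>\<omega>. \<omega> i) \<in> borel_measurable (change_law M0 M1 T)"
proof -
  have "(\<lambda>\<omega>. \<omega> i) \<in> measurable (change_law M0 M1 T) (if i \<le> T then M0 else M1)"
    unfolding change_law_def by (rule measurable_component_singleton) simp
  then show ?thesis by (subst (asm) measurable_cong_sets[OF refl sets_change_law_factor[OF assms]])
qed

lemma measurable_ecdf_change_law:
  assumes "real_distribution M0" "real_distribution M1"
  shows "(\<lambda>\<omega>. ecdf \<omega> a b x) \<in> borel_measurable (change_law M0 M1 T)"
  unfolding ecdf_eq_sum_indicator using measurable_change_law_coordinate[OF assms] by measurable

lemma indep_vars_change_law_compose:
  assumes rd: "real_distribution M0" "real_distribution M1"
    and f: "f \<in> borel_measurable borel" and "finite I" "I \<noteq> {}"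
  shows "prob_space.indep_vars (change_law M0 M1 T) (\<lambda>_. borel) (\<lambda>i \<omega>. f (\<omega> i)) I"
proof -
  interpret product_prob_space "\<lambda>i. if i \<le> T then M0 else M1" UNIV
    by (rule product_prob_space_change_law[OF rd])
  have "f \<in> borel_measurable (if i \<le> T then M0 else M1)" for i
    by (subst measurable_cong_sets[OF sets_change_law_factor[OF rd] refl]) (rule f)
  then show ?thesis
    unfolding change_law_def using assms(4,5)
    by (intro P.indep_vars_compose2[OF indep_vars_PiM_coordinates]) unfold_locales
qed

lemma integral_change_law_coordinate:
  fixes f :: "real \<Rightarrow> real"
  assumes rd: "real_distribution M0" "real_distribution M1"
    and f: "f \<in> borel_measurable borel" and "T < i"
  shows "(\<integral>\<omega>. f (\<omega> i) \<partial>change_law M0 M1 T) = (\<integral>y. f y \<partial>M1)"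
proof -
  interpret product_prob_space "\<lambda>i. if i \<le> T then M0 else M1" UNIV
    by (rule product_prob_space_change_law[OF rd])
  have "sets M1 = sets borel" using rd(2) by (rule real_distribution.events_eq_borel)
  then have f_M1: "f \<in> borel_measurable M1" by (subst measurable_cong_sets) (auto intro: f)
  have "(\<lambda>\<omega>. \<omega> i) \<in> measurable (change_law M0 M1 T) M1"
    using measurable_component_singleton[of i UNIV "\<lambda>i. if i \<le> T then M0 else M1"] \<open>T < i\<close>
    unfolding change_law_def by simp
  then have "(\<integral>\<omega>. f (\<omega> i) \<partial>change_law M0 M1 T)
      = (\<integral>y. f y \<partial>distr (change_law M0 M1 T) M1 (\<lambda>\<omega>. \<omega> i))"
    by (intro integral_distr[symmetric] f_M1)
  also have "\<dots> = (\<integral>y. f y \<partial>M1)"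
    using PiM_component[of i] \<open>T < i\<close> unfolding change_law_def by simp
  finally show ?thesis .
qed

lemma change_law_ecdf_deviation:
  assumes rd: "real_distribution M0" "real_distribution M1" and k: "1 \<le> k" and \<epsilon>: "0 \<le> \<epsilon>"
  shows "measure (change_law M0 M1 T)
      {\<omega> \<in> space (change_law M0 M1 T). \<epsilon> \<le> \<bar>ecdf \<omega> (T + 1) (T + k) x - cdf M1 x\<bar>}
    \<le> 2 * exp (- 2 * real k * \<epsilon>\<^sup>2)"
proof -
  define I where "I = {T + 1..T + k}"
  define Y where "Y = (\<lambda>i (\<omega> :: nat \<Rightarrow> real). indicator {..x} (\<omega> i) :: real)"
  interpret P: prob_space "change_law M0 M1 T" by (rule prob_space_change_law[OF rd])
  have I: "finite I" "I \<noteq> {}" using k by (auto simp: I_def)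
  have "P.expectation (Y i) = cdf M1 x" if "i \<in> I" for i
  proof -
    interpret M1: real_distribution M1 by fact
    have "P.expectation (Y i) = (\<integral>y. indicator {..x} y \<partial>M1)"
      unfolding Y_def using that by (intro integral_change_law_coordinate[OF rd]) (auto simp: I_def)
    then show ?thesis by (simp add: cdf_def)
  qed
  then have mean: "real k * cdf M1 x = (\<Sum>i\<in>I. P.expectation (Y i))" by (simp add: I_def)
  have indep: "P.indep_vars (\<lambda>_. borel) Y I"
    unfolding Y_def by (rule indep_vars_change_law_compose[OF rd _ I]) simp
  interpret Hoeffding_ineq "change_law M0 M1 T" I Y "\<lambda>_. 0" "\<lambda>_. 1" "real k * cdf M1 x"
    by unfold_locales (use I indep mean in \<open>auto simp: Y_def indicator_def\<close>)
  have "{\<omega> \<in> space (change_law M0 M1 T). \<epsilon> \<le> \<bar>ecdf \<omega> (T + 1) (T + k) x - cdf M1 x\<bar>}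
      = {\<omega> \<in> space (change_law M0 M1 T). real k * \<epsilon> \<le> \<bar>(\<Sum>i\<in>I. Y i \<omega>) - real k * cdf M1 x\<bar>}"
  proof -
    have "ecdf \<omega> (T + 1) (T + k) x - cdf M1 x = ((\<Sum>i\<in>I. Y i \<omega>) - real k * cdf M1 x) / real k"
      for \<omega>
      using k by (simp add: ecdf_eq_sum_indicator Y_def I_def diff_divide_distrib)
    moreover have "0 < real k" using k by simp
    ultimately show ?thesis by (simp add: pos_le_divide_eq mult.commute)
  qed
  also have "P.prob \<dots> \<le> 2 * exp (- 2 * (real k * \<epsilon>)\<^sup>2 / real k)"
    using Hoeffding_ineq_abs_ge[of "real k * \<epsilon>"] \<epsilon> k by (simp add: I_def)
  also have "\<dots> = 2 * exp (- 2 * real k * \<epsilon>\<^sup>2)"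
    using k by (simp add: power2_eq_square)
  finally show ?thesis .
qed

lemma delay_le_add_suminf_indicator:
  assumes "\<And>j. \<omega> \<notin> A j \<Longrightarrow> detects \<alpha> F0 \<omega> (T + K + j)"
  shows "delay \<alpha> F0 T \<omega> \<le> ennreal (real K) + (\<Sum>j. indicator (A j) \<omega>)"
proof (cases "\<exists>j. \<omega> \<notin> A j")
  case True
  define j0 where "j0 = (LEAST j. \<omega> \<notin> A j)"
  have "\<omega> \<notin> A j0" unfolding j0_def using True by (rule LeastI_ex)
  then have det: "detects \<alpha> F0 \<omega> (T + K + j0)" by (rule assms)
  have missed_before: "\<omega> \<in> A j" if "j < j0" for j
    using not_less_Least[OF that[unfolded j0_def]] by simp
  have "(LEAST n. detects \<alpha> F0 \<omega> n) \<le> T + K + j0" using det by (rule Least_le)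
  then have "real ((LEAST n. detects \<alpha> F0 \<omega> n) - T) \<le> real (K + j0)" by simp
  then have "delay \<alpha> F0 T \<omega> \<le> ennreal (real (K + j0))"
    using det unfolding delay_def by (auto intro: ennreal_leI simp del: of_nat_add)
  also have "\<dots> = ennreal (real K) + (\<Sum>j<j0. indicator (A j) \<omega>)"
    using missed_before by (simp add: ennreal_plus ennreal_of_nat_eq_real_of_nat)
  also have "\<dots> \<le> ennreal (real K) + (\<Sum>j. indicator (A j) \<omega>)"
    by (intro add_left_mono sum_le_suminf) auto
  finally show ?thesis .
next
  case False
  then have "(\<Sum>j. indicator (A j) \<omega> :: ennreal) = (\<Sum>j. ennreal 1)" by simp
  also have "\<dots> = top" by (rule summable_iff_suminf_neq_top) (auto simp: summable_const_iff)
  finally show ?thesis by simp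
qed

lemma nn_integral_delay_le:
  assumes "prob_space P" "\<And>j. A j \<in> sets P"
    and "\<And>\<omega> j. \<omega> \<in> space P \<Longrightarrow> \<omega> \<notin> A j \<Longrightarrow> detects \<alpha> F0 \<omega> (T + K + j)"
  shows "(\<integral>\<^sup>+ \<omega>. delay \<alpha> F0 T \<omega> \<partial>P) \<le> ennreal (real K) + (\<Sum>j. emeasure P (A j))"
proof -
  interpret prob_space P by fact
  have "(\<integral>\<^sup>+ \<omega>. delay \<alpha> F0 T \<omega> \<partial>P) \<le> (\<integral>\<^sup>+ \<omega>. ennreal (real K) + (\<Sum>j. indicator (A j) \<omega>) \<partial>P)"
    using assms(3) by (intro nn_integral_mono delay_le_add_suminf_indicator) auto
  also have "\<dots> = ennreal (real K) + (\<Sum>j. emeasure P (A j))"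
    using assms(2) by (simp add: nn_integral_add nn_integral_suminf emeasure_space_1)
  finally show ?thesis .
qed

lemma suminf_exp_neg_mult_le:
  fixes c :: real
  assumes "0 < c"
  shows "(\<Sum>j. ennreal (exp (- c * real j))) \<le> ennreal (1 + 1 / c)"
proof -
  define x where "x = exp (- c)"
  have x: "0 < x" "x < 1" using assms by (auto simp: x_def)
  have "(\<lambda>j. exp (- c * real j)) sums (1 / (1 - x))"
    using geometric_sums[of x] x by (simp add: x_def exp_of_nat_mult[symmetric] mult.commute)
  then have "(\<Sum>j. ennreal (exp (- c * real j))) = ennreal (1 / (1 - x))"
    by (intro suminf_ennreal_eq) auto
  also have "\<dots> \<le> ennreal (1 + 1 / c)"
  proof (rule ennreal_leI)
    have "x \<le> 1 / (1 + c)"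
      using exp_ge_add_one_self[of c] assms by (simp add: x_def exp_minus field_simps)
    then have "c / (1 + c) \<le> 1 - x" using assms by (simp add: field_simps)
    then have "1 / (1 - x) \<le> 1 / (c / (1 + c))"
      using assms x by (intro divide_left_mono) auto
    then show "1 / (1 - x) \<le> 1 + 1 / c" using assms by (simp add: field_simps)
  qed
  finally show ?thesis .
qed

lemma suminf_change_law_ecdf_deviation_le:
  assumes rd: "real_distribution M0" "real_distribution M1" and "0 < g" "1 \<le> K"
  shows "(\<Sum>j. emeasure (change_law M0 M1 T)
      {\<omega> \<in> space (change_law M0 M1 T). g / 2 \<le> \<bar>ecdf \<omega> (T + 1) (T + (K + j)) x - cdf M1 x\<bar>})
    \<le> ennreal (2 + 4 / g\<^sup>2)"
proof -
  define P where "P = change_law M0 M1 T"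
  define A where "A j = {\<omega> \<in> space P. g / 2 \<le> \<bar>ecdf \<omega> (T + 1) (T + (K + j)) x - cdf M1 x\<bar>}"
    for j
  interpret P: prob_space P unfolding P_def by (rule prob_space_change_law[OF rd])
  have "emeasure P (A j) \<le> 2 * ennreal (exp (- (g\<^sup>2 / 2) * real j))" for j
  proof -
    have "measure P (A j) \<le> 2 * exp (- 2 * real (K + j) * (g / 2)\<^sup>2)"
      unfolding A_def P_def using assms by (intro change_law_ecdf_deviation[OF rd]) auto
    also have "- 2 * real (K + j) * (g / 2)\<^sup>2 \<le> - (g\<^sup>2 / 2) * real j"
      by (simp add: power_divide field_simps)
    finally have "emeasure P (A j) \<le> ennreal (2 * exp (- (g\<^sup>2 / 2) * real j))"
      by (simp add: P.emeasure_eq_measure ennreal_leI)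
    then show ?thesis by (simp add: ennreal_mult)
  qed
  then have "(\<Sum>j. emeasure P (A j)) \<le> (\<Sum>j. 2 * ennreal (exp (- (g\<^sup>2 / 2) * real j)))"
    by (intro suminf_le) auto
  also have "\<dots> = 2 * (\<Sum>j. ennreal (exp (- (g\<^sup>2 / 2) * real j)))"
    by (simp only: ennreal_suminf_cmult)
  also have "\<dots> \<le> 2 * ennreal (1 + 1 / (g\<^sup>2 / 2))"
    using \<open>0 < g\<close> by (intro mult_left_mono suminf_exp_neg_mult_le) auto
  also have "\<dots> = ennreal (2 * (1 + 1 / (g\<^sup>2 / 2)))"
    by (subst ennreal_mult) auto
  also have "2 * (1 + 1 / (g\<^sup>2 / 2)) = 2 + 4 / g\<^sup>2" by simp
  finally show ?thesis unfolding A_def P_def .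
qed

lemma nn_integral_delay_change_law_le_point:
  assumes rd: "real_distribution M0" "real_distribution M1"
    and g: "g = \<bar>cdf M1 x - cdf M0 x\<bar>" "0 < g"
    and width: "\<And>k. K \<le> k \<Longrightarrow> ks_width \<alpha> k \<le> g" and "1 \<le> K"
  shows "(\<integral>\<^sup>+ \<omega>. delay \<alpha> (cdf M0) T \<omega> \<partial>change_law M0 M1 T) \<le> ennreal (real K + 2 + 4 / g\<^sup>2)"
proof -
  define P where "P = change_law M0 M1 T"
  define A where "A j = {\<omega> \<in> space P. g / 2 \<le> \<bar>ecdf \<omega> (T + 1) (T + (K + j)) x - cdf M1 x\<bar>}"
    for j
  interpret P: prob_space P unfolding P_def by (rule prob_space_change_law[OF rd])
  have "A j \<in> sets P" for j
    unfolding A_def P_def using measurable_ecdf_change_law[OF rd] by measurable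
  moreover have "detects \<alpha> (cdf M0) \<omega> (T + K + j)" if "\<omega> \<in> space P" "\<omega> \<notin> A j" for \<omega> j
  proof -
    interpret M0: real_distribution M0 by fact
    have "detects \<alpha> (cdf M0) \<omega> (T + (K + j))"
      using that \<open>1 \<le> K\<close> width[of "K + j"]
      by (intro detects_after_change[where ?F1.0 = "cdf M1" and x = x])
        (auto simp: A_def g M0.cdf_nonneg M0.cdf_bounded_prob)
    then show ?thesis by (simp add: add.assoc)
  qed
  ultimately have "(\<integral>\<^sup>+ \<omega>. delay \<alpha> (cdf M0) T \<omega> \<partial>P) \<le> ennreal (real K) + (\<Sum>j. emeasure P (A j))"
    by (intro nn_integral_delay_le) (auto simp: P.prob_space_axioms)
  also have "\<dots> \<le> ennreal (real K) + ennreal (2 + 4 / g\<^sup>2)"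
    unfolding A_def P_def using rd g \<open>1 \<le> K\<close>
    by (intro add_left_mono suminf_change_law_ecdf_deviation_le) auto
  also have "\<dots> = ennreal (real K + 2 + 4 / g\<^sup>2)"
    by (simp add: ennreal_plus add.assoc)
  finally show ?thesis unfolding P_def .
qed

lemma nn_integral_delay_change_law_le:
  assumes rd: "real_distribution M0" "real_distribution M1" and "cdf M1 \<noteq> cdf M0"
    and \<alpha>: "0 < \<alpha>" "\<alpha> < 1"
  defines "\<Delta> \<equiv> dKS (cdf M1) (cdf M0)"
  shows "(\<integral>\<^sup>+ \<omega>. delay \<alpha> (cdf M0) T \<omega> \<partial>change_law M0 M1 T)
    \<le> ennreal (2519 * (1 + ln (ln (exp 1 / \<Delta>)) + ln (1 / \<alpha>)) / \<Delta>\<^sup>2)"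
proof -
  define L where "L = 1 + ln (ln (exp 1 / \<Delta>)) + ln (1 / \<alpha>)"
  define K where "K = nat \<lceil>2500 * L / \<Delta>\<^sup>2\<rceil>"
  have \<Delta>: "0 < \<Delta>" "\<Delta> \<le> 1"
    unfolding \<Delta>_def using dKS_cdf_pos_le_1[OF rd \<open>cdf M1 \<noteq> cdf M0\<close>] by auto
  obtain x where x: "\<Delta> / 2 < \<bar>cdf M1 x - cdf M0 x\<bar>"
    using obtain_gt_half_dKS \<Delta>(1) unfolding \<Delta>_def by blast
  have L: "1 \<le> L" using ln_ln_exp_div_nonneg[OF \<Delta>] \<alpha> by (simp add: L_def)
  have pos: "0 < 2500 * L / \<Delta>\<^sup>2" using L \<Delta> by simp
  then have K: "2500 * L / \<Delta>\<^sup>2 \<le> real K" "real K \<le> 2500 * L / \<Delta>\<^sup>2 + 1"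
    unfolding K_def by (linarith, simp add: of_nat_nat)
  with pos have "1 \<le> K" by simp
  have "(\<integral>\<^sup>+ \<omega>. delay \<alpha> (cdf M0) T \<omega> \<partial>change_law M0 M1 T)
      \<le> ennreal (real K + 2 + 4 / \<bar>cdf M1 x - cdf M0 x\<bar>\<^sup>2)"
  proof (rule nn_integral_delay_change_law_le_point[OF rd refl _ _ \<open>1 \<le> K\<close>])
    show "0 < \<bar>cdf M1 x - cdf M0 x\<bar>" using x \<Delta> by linarith
    show "ks_width \<alpha> k \<le> \<bar>cdf M1 x - cdf M0 x\<bar>" if "K \<le> k" for k
      using ks_width_le_half[OF \<Delta> \<alpha>, of k] K(1) that x unfolding L_def by simp
  qed
  also have "\<dots> \<le> ennreal (2519 * L / \<Delta>\<^sup>2)"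
  proof (rule ennreal_leI)
    have "4 / \<bar>cdf M1 x - cdf M0 x\<bar>\<^sup>2 \<le> 4 / (\<Delta> / 2)\<^sup>2"
      using x \<Delta> by (intro divide_left_mono power_mono mult_pos_pos) auto
    moreover have "1 \<le> 1 / \<Delta>\<^sup>2" using \<Delta> by (simp add: power_le_one)
    ultimately show "real K + 2 + 4 / \<bar>cdf M1 x - cdf M0 x\<bar>\<^sup>2 \<le> 2519 * L / \<Delta>\<^sup>2"
      using K(2) L \<Delta> by (simp add: field_simps)
  qed
  finally show ?thesis unfolding L_def by (simp add: mult.assoc)
qed

theorem corollary3:
  shows "\<exists>C>0. \<forall>M0 M1 (T::nat) (\<alpha>::real).
     real_distribution M0 \<and> real_distribution M1 \<and> cdf M1 \<noteq> cdf M0 \<and> 0 < \<alpha> \<and> \<alpha> < 1 \<longrightarrow>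
     (let \<Delta> = dKS (cdf M1) (cdf M0) in
       (\<integral>\<^sup>+ \<omega>. delay \<alpha> (cdf M0) T \<omega> \<partial>change_law M0 M1 T)
         \<le> ennreal (C * (1 + ln (ln (exp 1 / \<Delta>)) + ln (1 / \<alpha>)) / \<Delta>\<^sup>2))"
proof (intro exI[of _ 2519] conjI allI impI)
  fix M0 M1 :: "real measure" and T :: nat and \<alpha> :: real
  assume "real_distribution M0 \<and> real_distribution M1 \<and> cdf M1 \<noteq> cdf M0 \<and> 0 < \<alpha> \<and> \<alpha> < 1"
  then show "let \<Delta> = dKS (cdf M1) (cdf M0) in
      (\<integral>\<^sup>+ \<omega>. delay \<alpha> (cdf M0) T \<omega> \<partial>change_law M0 M1 T)
        \<le> ennreal (2519 * (1 + ln (ln (exp 1 / \<Delta>)) + ln (1 / \<alpha>)) / \<Delta>\<^sup>2)"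
    unfolding Let_def by (intro nn_integral_delay_change_law_le) auto
qed simp

end
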